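(* Let $t\ge 2$ and $n_0=2^t-1$. There exists a spanning subgraph $H$ of $Q_{n_0}$ containing no subgraph isomorphic to $Q_2$, together with disjoint sets $C,D\subseteq\{0,1\}^{n_0}$, each of which is both an independent set and a dominating set of $H$, with $|C|=2^{n_0}/(n_0+1)$ and $|D|=3\cdot 2^{n_0}/(n_0+1)$, such that every edge of $H$ has at least one endpoint in $C\cup D$ and $e(H)\le 2^{n_0+1}$.
   Context: $Q_n$ is the hypercube on $\{0,1\}^n$ with edges between vertices differing in exactly one coordinate; $Q_2$ is the 4-cycle. A set $S$ is dominating in $H$ if every vertex of $H$ is in $S$ or adjacent in $H$ to a vertex of $S$; independent means no edge of $H$ has both endpoints in $S$. *)

theory Defs
  imports Main
begin

definition cube_vertices :: "nat \<Rightarrow> bool list set" where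
  "cube_vertices n = {xs. length xs = n}"

definition cube_adj :: "nat \<Rightarrow> bool list \<Rightarrow> bool list \<Rightarrow> bool" where
  "cube_adj n x y \<longleftrightarrow> x \<in> cube_vertices n \<and> y \<in> cube_vertices n \<and>
     card {i. i < n \<and> x ! i \<noteq> y ! i} = 1"

definition cube_edges :: "nat \<Rightarrow> bool list set set" where
  "cube_edges n = {{x, y} | x y. cube_adj n x y}"

text \<open>A spanning subgraph of Q_n is given by its edge set E (vertex set is all of Q_n).\<close>
definition spanning_subgraph :: "nat \<Rightarrow> bool list set set \<Rightarrow> bool" where
  "spanning_subgraph n E \<longleftrightarrow> E \<subseteq> cube_edges n"

definition Q2_free :: "bool list set set \<Rightarrow> bool" where
  "Q2_free E \<longleftrightarrow> \<not> (\<exists>a b c d. distinct [a, b, c, d] \<and>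
      {a, b} \<in> E \<and> {b, c} \<in> E \<and> {c, d} \<in> E \<and> {d, a} \<in> E)"

definition independent_in :: "bool list set set \<Rightarrow> bool list set \<Rightarrow> bool" where
  "independent_in E S \<longleftrightarrow> (\<forall>u\<in>S. \<forall>v\<in>S. {u, v} \<notin> E)"

definition dominating_in :: "bool list set \<Rightarrow> bool list set set \<Rightarrow> bool list set \<Rightarrow> bool" where
  "dominating_in V E S \<longleftrightarrow> S \<subseteq> V \<and> (\<forall>v\<in>V. v \<in> S \<or> (\<exists>u\<in>S. {u, v} \<in> E))"

end

theory Submission
  imports Defs
begin

(*
  Construction via the Hamming code.  Let n = 2^t - 1 and give coordinate i of Q_n the
  label i + 1, so the labels are exactly the nonzero t-bit numbers.  The syndrome s(x) of a
  vertex x is the XOR of the labels of its 1-coordinates; flipping the coordinate with label l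
  XORs the syndrome with l.  Hence C = {s = 0} (the Hamming code) is a perfect code, and every
  class {s = j} has size 2^n/(n+1).

  The graph H joins every x with s(x) <> 0 to its codeword neighbour (flip label s(x)), and every
  x with s(x) >= 4 to a neighbour of syndrome 1 or 2 (flip label s(x) XOR d(s(x)), where d \<in> {1,2}
  is chosen by the two lowest bits of s(x) so that two such vertices never pick each other's
  labels).  Then C and D = {s \<in> {1,2,3}} are independent and dominating, every edge meets C \<union> D,
  and H has at most 2 * 2^n edges.  The main work is showing that H has no 4-cycle: a case
  analysis on the syndromes of the cycle, using that a vertex of syndrome >= 4 is determined by
  its two H-neighbours.
*)

lemma xor_less_pow2:
  fixes a b :: nat
  assumes "a < 2 ^ t" and "b < 2 ^ t"
  shows "xor a b < 2 ^ t"
proof -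
  have "int (xor a b) < 2 ^ t"
    using assms by (simp add: XOR_upper of_nat_xor_eq)
  then show ?thesis by simp
qed

lemma xor_cancel_left: "xor (a :: nat) (xor a b) = b"
  by (simp add: xor.assoc[symmetric])

lemma xor_eq_0_iff: "xor (a :: nat) b = 0 \<longleftrightarrow> a = b"
  by (metis xor_cancel_left xor_self_eq)

definition flip :: "nat \<Rightarrow> bool list \<Rightarrow> bool list" where
  "flip i x = x[i := \<not> x ! i]"

lemma length_flip [simp]: "length (flip i x) = length x"
  by (simp add: flip_def)

lemma flip_Cons_0 [simp]: "flip 0 (b # xs) = (\<not> b) # xs"
  by (simp add: flip_def)

lemma flip_Cons_Suc [simp]: "flip (Suc j) (b # xs) = b # flip j xs"
  by (simp add: flip_def)

lemma flip_flip [simp]: "flip i (flip i x) = x"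
  by (cases "i < length x") (simp_all add: flip_def list_update_beyond)

lemma nth_flip: "i < length x \<Longrightarrow> flip i x ! j = (if j = i then \<not> x ! j else x ! j)"
  by (simp add: flip_def nth_list_update)

lemma nth_flip_flip:
  assumes "i \<noteq> j" "i < length z" "j < length z"
  shows "flip i (flip j z) ! m = (if m = i \<or> m = j then \<not> z ! m else z ! m)"
  using assms by (simp add: nth_flip)

lemma flip_twice_inject:
  assumes "i \<noteq> j" "k \<noteq> l" "i < length z" "j < length z" "k < length z" "l < length z"
    and eq: "flip i (flip j z) = flip k (flip l z)"
  shows "(i = k \<and> j = l) \<or> (i = l \<and> j = k)"
proof -
  have "m \<in> {i, j} \<longleftrightarrow> m \<in> {k, l}" for m
    using arg_cong[OF eq, of "\<lambda>x. x ! m"] assms(1-6) by (auto simp: nth_flip_flip split: if_splits)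
  then have "{i, j} = {k, l}" by blast
  then show ?thesis by (auto simp: doubleton_eq_iff)
qed

lemma flip_cube_edge:
  assumes "x \<in> cube_vertices n" "i < n"
  shows "{x, flip i x} \<in> cube_edges n"
proof -
  have "{j. j < n \<and> x ! j \<noteq> flip i x ! j} = {i}"
    using assms by (auto simp: nth_flip cube_vertices_def)
  then have "cube_adj n x (flip i x)"
    using assms by (simp add: cube_adj_def cube_vertices_def)
  then show ?thesis unfolding cube_edges_def by blast
qed

lemma finite_cube_vertices: "finite (cube_vertices n)"
  and card_cube_vertices: "card (cube_vertices n) = 2 ^ n"
proof -
  have "cube_vertices n = {xs. set xs \<subseteq> (UNIV :: bool set) \<and> length xs = n}"
    by (auto simp: cube_vertices_def)
  then show "finite (cube_vertices n)" "card (cube_vertices n) = 2 ^ n"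
    using finite_lists_length_eq[of "UNIV :: bool set" n]
      card_lists_length_eq[of "UNIV :: bool set" n] by simp_all
qed

subsection \<open>Syndromes\<close>

fun syndrome_from :: "bool list \<Rightarrow> nat \<Rightarrow> nat" where
  "syndrome_from [] k = 0"
| "syndrome_from (b # xs) k = xor (if b then k else 0) (syndrome_from xs (Suc k))"

lemma syndrome_from_flip:
  "i < length xs \<Longrightarrow> syndrome_from (flip i xs) k = xor (syndrome_from xs k) (i + k)"
proof (induction xs arbitrary: i k)
  case Nil
  then show ?case by simp
next
  case (Cons b xs)
  show ?case
  proof (cases i)
    case 0
    then show ?thesis
      by (cases b) (simp_all add: xor.commute xor.left_commute xor.assoc xor_cancel_left)
  next
    case (Suc j)
    with Cons show ?thesis by (simp add: xor.assoc)
  qed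
qed

lemma syndrome_from_less:
  "(\<forall>i < length xs. i + k < 2 ^ t) \<Longrightarrow> syndrome_from xs k < 2 ^ t"
proof (induction xs arbitrary: k)
  case Nil
  then show ?case by simp
next
  case (Cons b xs)
  have "k < 2 ^ t" and "syndrome_from xs (Suc k) < 2 ^ t"
    using Cons by auto
  then show ?case by (auto intro: xor_less_pow2)
qed

text \<open>For a syndrome p, low_partner p \<in> {1, 2} is the syndrome of the D-neighbour chosen for
  vertices of syndrome p >= 4.  It is chosen by the two lowest bits of p so that the partner
  relation is never symmetric (low_partner_asym); this is what rules out certain 4-cycles.\<close>
definition low_partner :: "nat \<Rightarrow> nat" where
  "low_partner p = (if bit p 0 = bit p 1 then 1 else 2)"

lemma low_partner_cases: "low_partner p = 1 \<or> low_partner p = 2"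
  by (simp add: low_partner_def)

definition low_label :: "nat \<Rightarrow> nat" where
  "low_label p = xor p (low_partner p)"

lemma low_partner_asym: "low_partner (xor p (low_partner p)) \<noteq> low_partner p"
  by (auto simp: low_partner_def bit_simps)

locale hamming_cube =
  fixes t n :: nat
  assumes n_eq: "n = 2 ^ t - 1" and t_ge_2: "2 \<le> t"
begin

abbreviation V :: "bool list set" where "V \<equiv> cube_vertices n"

definition syndrome :: "bool list \<Rightarrow> nat" where
  "syndrome x = syndrome_from x 1"

text \<open>Flip the coordinate carrying label l (labels run from 1 to n).\<close>
definition flip_label :: "nat \<Rightarrow> bool list \<Rightarrow> bool list" where
  "flip_label l x = flip (l - 1) x"

text \<open>The codeword neighbour, and for syndrome >= 4 the neighbour of syndrome 1 or 2.\<close>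
definition to_code :: "bool list \<Rightarrow> bool list" where
  "to_code x = flip_label (syndrome x) x"

definition to_low :: "bool list \<Rightarrow> bool list" where
  "to_low x = flip_label (low_label (syndrome x)) x"

lemma pow2_t: "2 ^ t = n + 1"
  using n_eq by simp

lemma n_ge_3: "3 \<le> n"
proof -
  have "(2 :: nat) ^ 2 \<le> 2 ^ t" using t_ge_2 by (rule power_increasing) simp
  then show ?thesis using n_eq by simp
qed

lemma in_V: "x \<in> V \<longleftrightarrow> length x = n"
  by (simp add: cube_vertices_def)

text \<open>Labels are 1, ..., n = 2^t - 1, so syndromes lie in 0, ..., n.\<close>
lemma syndrome_le: "x \<in> V \<Longrightarrow> syndrome x \<le> n"
  using syndrome_from_less[of x 1 t] pow2_t by (auto simp: syndrome_def in_V)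

lemma flip_label_V: "x \<in> V \<Longrightarrow> flip_label l x \<in> V"
  by (simp add: flip_label_def in_V)

lemma flip_label_flip_label [simp]: "flip_label l (flip_label l x) = x"
  by (simp add: flip_label_def)

lemma syndrome_flip_label:
  assumes "x \<in> V" "1 \<le> l" "l \<le> n"
  shows "syndrome (flip_label l x) = xor (syndrome x) l"
  using assms syndrome_from_flip[of "l - 1" x 1]
  by (simp add: syndrome_def flip_label_def in_V)

lemma flip_label_cube_edge:
  "x \<in> V \<Longrightarrow> 1 \<le> l \<Longrightarrow> l \<le> n \<Longrightarrow> {x, flip_label l x} \<in> cube_edges n"
  unfolding flip_label_def by (rule flip_cube_edge) auto

lemma to_code_V: "x \<in> V \<Longrightarrow> to_code x \<in> V"
  and to_low_V: "x \<in> V \<Longrightarrow> to_low x \<in> V"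
  by (simp_all add: to_code_def to_low_def flip_label_V)

lemma syndrome_to_code: "x \<in> V \<Longrightarrow> syndrome x \<noteq> 0 \<Longrightarrow> syndrome (to_code x) = 0"
  using syndrome_le by (simp add: to_code_def syndrome_flip_label)

text \<open>For syndrome >= 4 the low label is a valid label different from the syndrome itself,
  so to_low x is a cube neighbour of x distinct from to_code x.\<close>
lemma low_label_bounds:
  assumes "x \<in> V" "4 \<le> syndrome x"
  shows "1 \<le> low_label (syndrome x)" "low_label (syndrome x) \<le> n"
    and "low_label (syndrome x) \<noteq> syndrome x"
proof -
  have "syndrome x < 2 ^ t" and "low_partner (syndrome x) < 2 ^ t"
    using syndrome_le[OF assms(1)] low_partner_cases[of "syndrome x"] n_ge_3 pow2_t by auto
  then have "low_label (syndrome x) < 2 ^ t"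
    unfolding low_label_def by (rule xor_less_pow2)
  moreover have "low_label (syndrome x) \<noteq> 0"
    using assms low_partner_cases[of "syndrome x"] by (auto simp: low_label_def xor_eq_0_iff)
  then show "1 \<le> low_label (syndrome x)" by simp
  ultimately show "low_label (syndrome x) \<le> n" using pow2_t by simp
  have "low_partner (syndrome x) = xor (syndrome x) (low_label (syndrome x))"
    by (simp add: low_label_def xor_cancel_left)
  then show "low_label (syndrome x) \<noteq> syndrome x"
    using low_partner_cases[of "syndrome x"] by auto
qed

lemma syndrome_to_low:
  "x \<in> V \<Longrightarrow> 4 \<le> syndrome x \<Longrightarrow> syndrome (to_low x) = low_partner (syndrome x)"
  using low_label_bounds[of x]
  by (simp add: to_low_def syndrome_flip_label low_label_def xor_cancel_left)

definition H :: "bool list set set" where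
  "H = (\<lambda>x. {x, to_code x}) ` {x \<in> V. syndrome x \<noteq> 0}
     \<union> (\<lambda>x. {x, to_low x}) ` {x \<in> V. 4 \<le> syndrome x}"

lemma H_edge_cases:
  assumes "{a, b} \<in> H"
  shows "a \<in> V \<and> b \<in> V \<and>
    ((syndrome a \<noteq> 0 \<and> b = to_code a) \<or> (syndrome b \<noteq> 0 \<and> a = to_code b) \<or>
     (4 \<le> syndrome a \<and> b = to_low a) \<or> (4 \<le> syndrome b \<and> a = to_low b))"
  using assms unfolding H_def by (auto simp: doubleton_eq_iff to_code_V to_low_V)

lemma H_code_edge: "x \<in> V \<Longrightarrow> syndrome x \<noteq> 0 \<Longrightarrow> {to_code x, x} \<in> H"
  and H_low_edge: "x \<in> V \<Longrightarrow> 4 \<le> syndrome x \<Longrightarrow> {to_low x, x} \<in> H"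
  unfolding H_def by (auto simp: insert_commute)

lemma H_spanning: "spanning_subgraph n H"
  unfolding spanning_subgraph_def
proof
  fix e assume "e \<in> H"
  then obtain x where x: "x \<in> V"
    and "(syndrome x \<noteq> 0 \<and> e = {x, to_code x}) \<or> (4 \<le> syndrome x \<and> e = {x, to_low x})"
    unfolding H_def by blast
  then show "e \<in> cube_edges n"
    using flip_label_cube_edge[OF x] syndrome_le[OF x] low_label_bounds[OF x]
    by (auto simp: to_code_def to_low_def)
qed

lemma high_vertex_neighbours:
  assumes "4 \<le> syndrome v" "{v, u} \<in> H"
  shows "u = to_code v \<or> u = to_low v"
proof -
  have "u \<in> V" using H_edge_cases[OF assms(2)] by blast
  then have "syndrome (to_code u) = 0" "syndrome (to_low u) < 4" if "4 \<le> syndrome u"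
    using that syndrome_to_code syndrome_to_low low_partner_cases[of "syndrome u"] by auto
  then show ?thesis
    using H_edge_cases[OF assms(2)] syndrome_to_code[OF \<open>u \<in> V\<close>] assms(1) by force
qed

lemma code_vertex_neighbours:
  assumes "syndrome u = 0" "{u, w} \<in> H"
  shows "syndrome w \<noteq> 0 \<and> u = to_code w"
proof -
  have "w \<in> V" using H_edge_cases[OF assms(2)] by blast
  then have "syndrome (to_low w) \<noteq> 0" if "4 \<le> syndrome w"
    using that syndrome_to_low low_partner_cases[of "syndrome w"] by auto
  then show ?thesis using H_edge_cases[OF assms(2)] assms(1) by auto
qed

lemma low_vertex_neighbours:
  assumes "syndrome w \<noteq> 0" "syndrome w < 4" "{w, x} \<in> H"
  shows "x = to_code w \<or> (4 \<le> syndrome x \<and> w = to_low x)"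
proof -
  have "x \<in> V" using H_edge_cases[OF assms(3)] by blast
  then show ?thesis using H_edge_cases[OF assms(3)] syndrome_to_code assms(1,2) by auto
qed

text \<open>A vertex of syndrome >= 4 is determined by its two neighbours: otherwise x and y differ
  from z = to_code x in the labels s(x) and s(y), and equality of to_low forces the labels to
  be each other's low labels, contradicting low_partner_asym.\<close>
lemma high_vertex_determined:
  assumes x: "x \<in> V" "4 \<le> syndrome x" and y: "y \<in> V" "4 \<le> syndrome y"
    and same_code: "to_code x = to_code y" and same_low: "to_low x = to_low y"
  shows "x = y"
proof (rule ccontr)
  assume "x \<noteq> y"
  define z where "z = to_code x"
  define p q where "p = syndrome x" and "q = syndrome y"
  have xz: "x = flip_label p z" by (simp add: z_def p_def to_code_def)
  have yz: "y = flip_label q z"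
    using same_code by (metis z_def q_def to_code_def flip_label_flip_label)
  have "p \<noteq> q" using xz yz \<open>x \<noteq> y\<close> by auto
  have "to_low x = flip_label (low_label p) x" "to_low y = flip_label (low_label q) y"
    by (simp_all add: to_low_def p_def q_def)
  with same_low have "flip_label (low_label p) x = flip_label (low_label q) y" by simp
  then have same_flips:
    "flip (low_label p - 1) (flip (p - 1) z) = flip (low_label q - 1) (flip (q - 1) z)"
    using xz yz by (simp add: flip_label_def)
  have "length z = n" using to_code_V[OF x(1)] by (simp add: z_def in_V)
  have "1 \<le> p" "p \<le> n" "1 \<le> q" "q \<le> n"
    using x y syndrome_le by (auto simp: p_def q_def)
  moreover have "1 \<le> low_label p" "low_label p \<le> n" "low_label p \<noteq> p"
    and "1 \<le> low_label q" "low_label q \<le> n" "low_label q \<noteq> q"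
    using low_label_bounds[OF x] low_label_bounds[OF y] by (simp_all add: p_def q_def)
  ultimately have "low_label p - 1 \<noteq> p - 1" "low_label q - 1 \<noteq> q - 1"
    and "low_label p - 1 < length z" "p - 1 < length z"
    and "low_label q - 1 < length z" "q - 1 < length z"
    using \<open>length z = n\<close> by linarith+
  from flip_twice_inject[OF this same_flips]
  have "(low_label p - 1 = low_label q - 1 \<and> p - 1 = q - 1)
      \<or> (low_label p - 1 = q - 1 \<and> p - 1 = low_label q - 1)" .
  then have labels: "low_label p = q \<and> low_label q = p"
    using \<open>p \<noteq> q\<close> \<open>1 \<le> p\<close> \<open>1 \<le> q\<close> \<open>1 \<le> low_label p\<close> \<open>1 \<le> low_label q\<close>
    by auto
  then have "low_partner p = xor p q" and "low_partner q = xor q p"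
    by (metis low_label_def xor_cancel_left)+
  then have "low_partner q = low_partner p"
    by (simp add: xor.commute)
  moreover have "low_partner q \<noteq> low_partner p"
    using low_partner_asym[of p] labels by (simp add: low_label_def)
  ultimately show False by simp
qed

subsubsection \<open>H contains no 4-cycle\<close>

text \<open>A 4-cycle a b c d with b = to_code a and d = to_low a for a high vertex a is impossible:
  c is adjacent to the codeword b and to the low vertex d, so c is a high vertex with the same
  two neighbours as a, hence c = a.\<close>
lemma no_square_code_low:
  assumes "distinct [a, b, c, d]" "{b, c} \<in> H" "{c, d} \<in> H"
    and a: "a \<in> V" "4 \<le> syndrome a" and b: "b = to_code a" and d: "d = to_low a"
  shows False
proof -
  have "c \<in> V" "d \<in> V" using H_edge_cases[OF assms(3)] by blast+
  have "syndrome b = 0" using syndrome_to_code[OF a(1)] a(2) b by simp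
  from code_vertex_neighbours[OF this assms(2)]
  have c_code: "syndrome c \<noteq> 0" "b = to_code c" by auto
  have sd: "syndrome d = low_partner (syndrome a)" using syndrome_to_low[OF a] d by simp
  then have "syndrome d \<noteq> 0" "syndrome d < 4"
    using low_partner_cases[of "syndrome a"] by auto
  moreover have "{d, c} \<in> H" using assms(3) by (simp add: insert_commute)
  ultimately have "c = to_code d \<or> (4 \<le> syndrome c \<and> d = to_low c)"
    by (rule low_vertex_neighbours)
  moreover have "c \<noteq> to_code d"
    using syndrome_to_code[OF \<open>d \<in> V\<close> \<open>syndrome d \<noteq> 0\<close>] c_code(1) by auto
  ultimately have "4 \<le> syndrome c" "d = to_low c" by blast+
  have "to_code c = to_code a" using c_code(2) b by simp
  moreover have "to_low c = to_low a" using \<open>d = to_low c\<close> d by simp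
  ultimately have "c = a"
    using high_vertex_determined[OF \<open>c \<in> V\<close> \<open>4 \<le> syndrome c\<close> a] by blast
  then show False using assms(1) by simp
qed

text \<open>No 4-cycle passes through a vertex of syndrome >= 4: its two cycle-neighbours are
  to_code a and to_low a, in one of the two orientations.\<close>
lemma no_square_through_high:
  assumes cycle: "distinct [a, b, c, d]" "{a, b} \<in> H" "{b, c} \<in> H" "{c, d} \<in> H" "{d, a} \<in> H"
    and high: "4 \<le> syndrome a"
  shows False
proof -
  have "a \<in> V" using H_edge_cases[OF cycle(2)] by blast
  have "{a, d} \<in> H" using cycle(5) by (simp add: insert_commute)
  then have "b = to_code a \<or> b = to_low a" "d = to_code a \<or> d = to_low a"
    using high_vertex_neighbours[OF high] cycle(2) by blast+
  moreover have "b \<noteq> d" using cycle(1) by simp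
  ultimately consider "b = to_code a" "d = to_low a" | "d = to_code a" "b = to_low a"
    by auto
  then show False
  proof cases
    case 1
    then show False using no_square_code_low[OF cycle(1,3,4) \<open>a \<in> V\<close> high] by blast
  next
    case 2
    have "distinct [a, d, c, b]" using cycle(1) by auto
    moreover have "{d, c} \<in> H" "{c, b} \<in> H" using cycle(3,4) by (simp_all add: insert_commute)
    ultimately show False using no_square_code_low[OF _ _ _ \<open>a \<in> V\<close> high 2(1,2)] by blast
  qed
qed

text \<open>No 4-cycle has all syndromes below 4: a low vertex has only one low-or-code neighbour,
  its codeword, and a codeword has no code neighbour.\<close>
lemma no_square_low:
  assumes cycle: "distinct [a, b, c, d]" "{a, b} \<in> H" "{b, c} \<in> H" "{c, d} \<in> H" "{d, a} \<in> H"
    and low: "syndrome a < 4" "syndrome b < 4" "syndrome c < 4" "syndrome d < 4"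
  shows False
proof (cases "syndrome a = 0")
  case True
  from code_vertex_neighbours[OF True cycle(2)]
  have "syndrome b \<noteq> 0" and a_code: "a = to_code b" by blast+
  from low_vertex_neighbours[OF this(1) low(2) cycle(3)] low(3)
  have "c = to_code b" by linarith
  with a_code have "a = c" by simp
  then show False using cycle(1) by simp
next
  case False
  from low_vertex_neighbours[OF False low(1) cycle(2)] low(2)
  have "b = to_code a" by linarith
  moreover have "{a, d} \<in> H" using cycle(5) by (simp add: insert_commute)
  from low_vertex_neighbours[OF False low(1) this] low(4)
  have "d = to_code a" by linarith
  ultimately have "b = d" by simp
  then show False using cycle(1) by simp
qed

theorem H_Q2_free: "Q2_free H"
  unfolding Q2_free_def
proof clarify
  fix a b c d
  assume cycle: "distinct [a, b, c, d]" "{a, b} \<in> H" "{b, c} \<in> H" "{c, d} \<in> H" "{d, a} \<in> H"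
  text \<open>Every rotation of the cycle is again a cycle, so no vertex has syndrome >= 4.\<close>
  have "\<not> 4 \<le> syndrome a" using no_square_through_high[OF cycle] by blast
  moreover have "\<not> 4 \<le> syndrome b"
    using no_square_through_high[OF _ cycle(3,4,5,2)] cycle(1) by auto
  moreover have "\<not> 4 \<le> syndrome c"
    using no_square_through_high[OF _ cycle(4,5,2,3)] cycle(1) by auto
  moreover have "\<not> 4 \<le> syndrome d"
    using no_square_through_high[OF _ cycle(5,2,3,4)] cycle(1) by auto
  ultimately show False using no_square_low[OF cycle] by simp
qed

definition syndrome_class :: "nat \<Rightarrow> bool list set" where
  "syndrome_class j = {x \<in> V. syndrome x = j}"

text \<open>C is the Hamming code, D the vertices of syndrome 1, 2 or 3.\<close>
definition code_vertices :: "bool list set" where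
  "code_vertices = syndrome_class 0"

definition low_vertices :: "bool list set" where
  "low_vertices = syndrome_class 1 \<union> syndrome_class 2 \<union> syndrome_class 3"

lemma code_vertices_iff: "x \<in> code_vertices \<longleftrightarrow> x \<in> V \<and> syndrome x = 0"
  by (simp add: code_vertices_def syndrome_class_def)

lemma low_vertices_iff: "x \<in> low_vertices \<longleftrightarrow> x \<in> V \<and> syndrome x \<noteq> 0 \<and> syndrome x < 4"
  by (auto simp: low_vertices_def syndrome_class_def)

lemma code_low_vertices_subset_disjoint:
  "code_vertices \<subseteq> V" "low_vertices \<subseteq> V" "code_vertices \<inter> low_vertices = {}"
  by (auto simp: code_vertices_iff low_vertices_iff)

text \<open>Flipping label j is a bijection from the code onto the syndrome class j.\<close>
lemma card_syndrome_class:
  assumes "1 \<le> j" "j \<le> n"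
  shows "card (syndrome_class j) = card (syndrome_class 0)"
proof -
  have "bij_betw (flip_label j) (syndrome_class 0) (syndrome_class j)"
    by (rule bij_betw_byWitness[where f' = "flip_label j"])
      (use assms in \<open>auto simp: syndrome_class_def syndrome_flip_label flip_label_V\<close>)
  then show ?thesis by (simp add: bij_betw_same_card)
qed

text \<open>The n + 1 syndrome classes partition the cube and have equal size.\<close>
lemma card_cube_syndrome_classes: "2 ^ n = (n + 1) * card (syndrome_class 0)"
proof -
  have "V = (\<Union>j<n + 1. syndrome_class j)"
    using syndrome_le by (auto simp: syndrome_class_def less_Suc_eq_le)
  then have "card V = card (\<Union>j<n + 1. syndrome_class j)" by simp
  also have "\<dots> = (\<Sum>j<n + 1. card (syndrome_class j))"
    by (rule card_UN_disjoint) (use finite_cube_vertices in \<open>auto simp: syndrome_class_def\<close>)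
  also have "\<dots> = (\<Sum>j<n + 1. card (syndrome_class 0))"
  proof (rule sum.cong)
    fix j assume "j \<in> {..<n + 1}"
    then show "card (syndrome_class j) = card (syndrome_class 0)"
      using card_syndrome_class[of j] by (cases "j = 0") auto
  qed simp
  finally show ?thesis by (simp add: card_cube_vertices)
qed

lemma card_code_vertices: "card code_vertices * (n + 1) = 2 ^ n"
  using card_cube_syndrome_classes by (simp add: code_vertices_def)

lemma card_low_vertices: "card low_vertices * (n + 1) = 3 * 2 ^ n"
proof -
  have fin: "finite (syndrome_class j)" for j
    using finite_cube_vertices by (simp add: syndrome_class_def)
  have "card low_vertices = card (syndrome_class 1) + card (syndrome_class 2) + card (syndrome_class 3)"
    unfolding low_vertices_def using fin
    by (simp add: card_Un_disjoint syndrome_class_def Int_Un_distrib2 disjoint_iff)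
  also have "\<dots> = 3 * card (syndrome_class 0)"
    using card_syndrome_class n_ge_3 by simp
  finally show ?thesis using card_cube_syndrome_classes by simp
qed

lemma code_independent: "independent_in H code_vertices"
  unfolding independent_in_def
proof (intro ballI notI)
  fix u v assume "u \<in> code_vertices" "v \<in> code_vertices" "{u, v} \<in> H"
  then show False using code_vertex_neighbours[of u v] by (auto simp: code_vertices_iff)
qed

text \<open>C is a perfect code: each non-codeword x is joined to its codeword to_code x.\<close>
lemma code_dominating: "dominating_in V H code_vertices"
  unfolding dominating_in_def
proof (intro conjI ballI)
  show "code_vertices \<subseteq> V" by (rule code_low_vertices_subset_disjoint)
  fix v assume v: "v \<in> V"
  show "v \<in> code_vertices \<or> (\<exists>u \<in> code_vertices. {u, v} \<in> H)"
  proof (cases "syndrome v = 0")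
    case False
    then have "to_code v \<in> code_vertices"
      using v syndrome_to_code to_code_V by (simp add: code_vertices_iff)
    then show ?thesis using H_code_edge[OF v False] by blast
  qed (use v in \<open>simp add: code_vertices_iff\<close>)
qed

text \<open>A low vertex is adjacent only to its codeword and to vertices of syndrome >= 4.\<close>
lemma low_independent: "independent_in H low_vertices"
  unfolding independent_in_def
proof (intro ballI notI)
  fix u v assume u: "u \<in> low_vertices" and v: "v \<in> low_vertices" and "{u, v} \<in> H"
  then have "v = to_code u \<or> 4 \<le> syndrome v"
    using low_vertex_neighbours[of u v] by (auto simp: low_vertices_iff)
  then show False using u v syndrome_to_code by (auto simp: low_vertices_iff)
qed

text \<open>D dominates: a codeword v is joined to flip_label 1 v (syndrome 1, whose codeword is v),
  and a vertex of syndrome >= 4 to to_low v.\<close>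
lemma low_dominating: "dominating_in V H low_vertices"
  unfolding dominating_in_def
proof (intro conjI ballI)
  show "low_vertices \<subseteq> V" by (rule code_low_vertices_subset_disjoint)
  fix v assume v: "v \<in> V"
  consider "syndrome v = 0" | "syndrome v \<noteq> 0" "syndrome v < 4" | "4 \<le> syndrome v"
    by linarith
  then show "v \<in> low_vertices \<or> (\<exists>u \<in> low_vertices. {u, v} \<in> H)"
  proof cases
    case 1
    define u where "u = flip_label 1 v"
    have "u \<in> V" using flip_label_V[OF v] by (simp add: u_def)
    have su: "syndrome u = 1" using syndrome_flip_label[OF v] n_ge_3 1 by (simp add: u_def)
    then have "to_code u = v" by (simp add: to_code_def u_def)
    then have "{v, u} \<in> H" using H_code_edge[OF \<open>u \<in> V\<close>] su by simp
    moreover have "u \<in> low_vertices" using su \<open>u \<in> V\<close> by (simp add: low_vertices_iff)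
    ultimately show ?thesis by (metis insert_commute)
  next
    case 2
    then show ?thesis using v by (simp add: low_vertices_iff)
  next
    case 3
    then have "to_low v \<in> low_vertices"
      using v syndrome_to_low to_low_V low_partner_cases[of "syndrome v"]
      by (auto simp: low_vertices_iff)
    then show ?thesis using H_low_edge[OF v 3] by blast
  qed
qed

lemma H_edges_meet_code_or_low: "\<forall>e \<in> H. e \<inter> (code_vertices \<union> low_vertices) \<noteq> {}"
proof
  fix e assume "e \<in> H"
  then obtain x where x: "x \<in> V"
    and "(syndrome x \<noteq> 0 \<and> e = {x, to_code x}) \<or> (4 \<le> syndrome x \<and> e = {x, to_low x})"
    unfolding H_def by blast
  moreover have "to_code x \<in> code_vertices" if "syndrome x \<noteq> 0"
    using that x syndrome_to_code to_code_V by (simp add: code_vertices_iff)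
  moreover have "to_low x \<in> low_vertices" if "4 \<le> syndrome x"
    using that x syndrome_to_low to_low_V low_partner_cases[of "syndrome x"]
    by (auto simp: low_vertices_iff)
  ultimately show "e \<inter> (code_vertices \<union> low_vertices) \<noteq> {}" by blast
qed

text \<open>H is the union of the images of two maps defined on subsets of V.\<close>
lemma card_H: "card H \<le> 2 ^ (n + 1)"
proof -
  have "card H \<le> card ((\<lambda>x. {x, to_code x}) ` {x \<in> V. syndrome x \<noteq> 0})
      + card ((\<lambda>x. {x, to_low x}) ` {x \<in> V. 4 \<le> syndrome x})"
    unfolding H_def by (rule card_Un_le)
  also have "\<dots> \<le> card {x \<in> V. syndrome x \<noteq> 0} + card {x \<in> V. 4 \<le> syndrome x}"
    by (intro add_mono card_image_le) (simp_all add: finite_cube_vertices)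
  also have "\<dots> \<le> card V + card V"
    by (intro add_mono card_mono finite_cube_vertices) auto
  finally show ?thesis by (simp add: card_cube_vertices)
qed

end

theorem mainTheorem10:
  fixes t n0 :: nat
  assumes "t \<ge> 2" and "n0 = 2 ^ t - 1"
  shows "\<exists>E C D.
     spanning_subgraph n0 E \<and> Q2_free E \<and>
     C \<subseteq> cube_vertices n0 \<and> D \<subseteq> cube_vertices n0 \<and> C \<inter> D = {} \<and>
     independent_in E C \<and> dominating_in (cube_vertices n0) E C \<and>
     independent_in E D \<and> dominating_in (cube_vertices n0) E D \<and>
     card C * (n0 + 1) = 2 ^ n0 \<and> card D * (n0 + 1) = 3 * 2 ^ n0 \<and>
     (\<forall>e\<in>E. e \<inter> (C \<union> D) \<noteq> {}) \<and>
     card E \<le> 2 ^ (n0 + 1)"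
proof -
  interpret hamming_cube t n0
    using assms by unfold_locales auto
  show ?thesis
    using H_spanning H_Q2_free code_low_vertices_subset_disjoint
      code_independent code_dominating low_independent low_dominating
      card_code_vertices card_low_vertices H_edges_meet_code_or_low card_H
    by blast
qed

end
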